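(* Let $X$ be a space, $Y\subseteq X$ a subspace and $\tau$ a cardinal. Then $Y$ is $F_\tau$-embedded in $X$ if one of the following holds: (a) $X$ is a normal $T_1$-space, $\tau\geq\aleph_0$ and $nw(Y)\leq\tau$; (b) $Y$ is preopen in $X$ (i.e., $Y\subseteq \mathrm{int}_X(\mathrm{cl}_X(Y))$) and there is a family $\alpha$ of open subsets of $Y$ which is the union of $\tau$ strongly point-finite families and which F-separates $Y$ (in the space $Y$).
   Context: "Space" means topological $T_0$-space. $nw(Y)$ is the network weight of $Y$. A family of subsets of a set is strongly point-finite if every countably infinite subfamily contains a finite subfamily with empty intersection. A family $\mathcal{U}$ of subsets of a space $W$ F-separates $S\subseteq W$ if for distinct $x,y\in S$ there is $U\in\mathcal{U}$ with $x\in U$ and $y\notin\mathrm{cl}_W(U)$, or vice versa. $Y$ is $F_\tau$-embedded in $X$ if there is a family of open subsets of $X$ which is the union of $\tau$ point-finite families of open subsets of $X$ and which F-separates $Y$ (closures taken in $X$). *)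

theory Defs
  imports "HOL-Analysis.Analysis"
begin

definition point_finite :: "'a topology \<Rightarrow> 'a set set \<Rightarrow> bool" where
  "point_finite X \<U> \<longleftrightarrow> (\<forall>x \<in> topspace X. finite {U \<in> \<U>. x \<in> U})"

definition strongly_point_finite :: "'a set set \<Rightarrow> bool" where
  "strongly_point_finite \<U> \<longleftrightarrow>
     (\<forall>\<C> \<subseteq> \<U>. countable \<C> \<and> infinite \<C> \<longrightarrow> (\<exists>\<F> \<subseteq> \<C>. finite \<F> \<and> \<Inter>\<F> = {}))"

definition F_separates :: "'a topology \<Rightarrow> 'a set set \<Rightarrow> 'a set \<Rightarrow> bool" where
  "F_separates W \<U> S \<longleftrightarrow>
     (\<forall>x \<in> S. \<forall>y \<in> S. x \<noteq> y \<longrightarrow>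
        (\<exists>U \<in> \<U>. (x \<in> U \<and> y \<notin> W closure_of U) \<or> (y \<in> U \<and> x \<notin> W closure_of U)))"

text \<open>Y is F_tau-embedded in X, the cardinal tau being the cardinality of the index set T.\<close>
definition F_tau_embedded :: "'a topology \<Rightarrow> 'a set \<Rightarrow> 'i set \<Rightarrow> bool" where
  "F_tau_embedded X Y T \<longleftrightarrow>
     (\<exists>\<A> :: 'i \<Rightarrow> 'a set set.
        (\<forall>i \<in> T. (\<forall>U \<in> \<A> i. openin X U) \<and> point_finite X (\<A> i)) \<and>
        F_separates X (\<Union>i \<in> T. \<A> i) Y)"

definition network :: "'a topology \<Rightarrow> 'a set set \<Rightarrow> bool" where
  "network Y \<N> \<longleftrightarrow> (\<forall>N \<in> \<N>. N \<subseteq> topspace Y) \<and>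
     (\<forall>U x. openin Y U \<and> x \<in> U \<longrightarrow> (\<exists>N \<in> \<N>. x \<in> N \<and> N \<subseteq> U))"

definition nw_le :: "'a topology \<Rightarrow> 'i set \<Rightarrow> bool" where
  "nw_le Y T \<longleftrightarrow> (\<exists>\<N>. network Y \<N> \<and> (card_of \<N>, card_of T) \<in> ordLeq)"

definition preopen :: "'a topology \<Rightarrow> 'a set \<Rightarrow> bool" where
  "preopen X Y \<longleftrightarrow> Y \<subseteq> X interior_of (X closure_of Y)"

end

theory Submission
  imports Defs
begin

text \<open>
  (a) Two points of \<open>Y\<close> lie in members \<open>N\<^sub>1, N\<^sub>2\<close> of a network of \<open>Y\<close>
  with disjoint closures in \<open>X\<close>; by normality some open \<open>W\<close> contains the closure of
  \<open>N\<^sub>1\<close> and has closure missing that of \<open>N\<^sub>2\<close>. Choosing one such \<open>W\<close> per pair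
  gives at most \<open>nw(Y)\<^sup>2 \<le> \<tau>\<close> open sets, and singleton families are point-finite.

  (b) Replace each \<open>U\<close> open in \<open>Y\<close> by the largest open subset \<open>e(U)\<close> of
  \<open>int cl Y\<close> whose trace on \<open>Y\<close> lies in \<open>U\<close>. Preopenness gives
  \<open>U \<subseteq> e(U)\<close>; density of \<open>Y\<close> in \<open>int cl Y\<close> gives
  \<open>cl e(U) \<subseteq> cl U\<close>, and turns a finite subfamily of \<open>\<alpha>\<close> with empty
  intersection into one of the \<open>e(U)\<close> with empty intersection, so strongly
  point-finite families become point-finite.
\<close>

lemma strongly_point_finite_centred_finite:
  assumes "strongly_point_finite \<U>" and "\<C> \<subseteq> \<U>"
    and centred: "\<And>\<F>. \<F> \<subseteq> \<C> \<Longrightarrow> finite \<F> \<Longrightarrow> \<Inter>\<F> \<noteq> {}"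
  shows "finite \<C>"
proof (rule ccontr)
  assume "infinite \<C>"
  then obtain \<C>' where "\<C>' \<subseteq> \<C>" "countable \<C>'" "infinite \<C>'"
    using infinite_countable_subset' by blast
  then obtain \<F> where "\<F> \<subseteq> \<C>'" "finite \<F>" "\<Inter>\<F> = {}"
    using assms(1,2) unfolding strongly_point_finite_def by (meson order_trans)
  then show False
    using centred \<open>\<C>' \<subseteq> \<C>\<close> by blast
qed

lemma finite_imp_point_finite: "finite \<U> \<Longrightarrow> point_finite X \<U>"
  unfolding point_finite_def by simp

lemma F_tau_embedded_if_card_of_ordLeq:
  assumes "\<forall>U \<in> \<U>. openin X U" and "F_separates X \<U> Y"
    and "(card_of \<U>, card_of T) \<in> ordLeq"
  shows "F_tau_embedded X Y T"
proof -
  obtain f where f: "inj_on f \<U>" "f ` \<U> \<subseteq> T"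
    using assms(3) card_of_ordLeq[of \<U> T] by blast
  define \<A> where "\<A> i = {U \<in> \<U>. f U = i}" for i
  have "\<A> i \<subseteq> {inv_into \<U> f i}" for i
    unfolding \<A>_def using f(1) by auto
  then have "finite (\<A> i)" for i
    by (rule finite_subset) simp
  then have "point_finite X (\<A> i)" for i
    by (rule finite_imp_point_finite)
  moreover have "\<forall>U \<in> \<A> i. openin X U" for i
    unfolding \<A>_def using assms(1) by blast
  moreover have "(\<Union>i \<in> T. \<A> i) = \<U>"
    unfolding \<A>_def using f(2) by blast
  ultimately show ?thesis
    unfolding F_tau_embedded_def using assms(2) by metis
qed

lemma normal_t1_network_separates_points:
  assumes "normal_space X" "t1_space X" "Y \<subseteq> topspace X"
    and net: "network (subtopology X Y) \<N>"
    and "x \<in> Y" "y \<in> Y" "x \<noteq> y"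
  shows "\<exists>N\<^sub>1\<in>\<N>. \<exists>N\<^sub>2\<in>\<N>. \<exists>W. x \<in> N\<^sub>1 \<and> y \<in> N\<^sub>2 \<and> openin X W \<and>
           X closure_of N\<^sub>1 \<subseteq> W \<and> disjnt (X closure_of N\<^sub>2) (X closure_of W)"
proof -
  have "closedin X {x}" "closedin X {y}"
    using closedin_t1_singleton[OF assms(2)] assms(3,5,6) by blast+
  moreover have "disjnt {x} {y}"
    using assms(7) by simp
  ultimately obtain U V where UV: "openin X U" "openin X V" "x \<in> U" "y \<in> V"
      "disjnt (X closure_of U) (X closure_of V)"
    using normal_space_disjoint_closures[THEN iffD1, OF assms(1), rule_format, of "{x}" "{y}"] by auto
  have small: "\<exists>N \<in> \<N>. z \<in> N \<and> N \<subseteq> G" if "openin X G" "z \<in> Y" "z \<in> G" for G z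
  proof -
    have "openin (subtopology X Y) (Y \<inter> G)"
      using that(1) by (auto simp: openin_subtopology)
    then have "\<exists>N \<in> \<N>. z \<in> N \<and> N \<subseteq> Y \<inter> G"
      using net that(2,3) unfolding network_def by (meson IntI)
    then show ?thesis
      by blast
  qed
  obtain N\<^sub>1 N\<^sub>2 where N: "N\<^sub>1 \<in> \<N>" "x \<in> N\<^sub>1" "N\<^sub>1 \<subseteq> U" "N\<^sub>2 \<in> \<N>" "y \<in> N\<^sub>2" "N\<^sub>2 \<subseteq> V"
    using small[OF UV(1) assms(5) UV(3)] small[OF UV(2) assms(6) UV(4)] by blast
  have "disjnt (X closure_of N\<^sub>1) (X closure_of N\<^sub>2)"
    using disjnt_subset1[OF disjnt_subset2[OF UV(5)]] closure_of_mono N(3,6) by blast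
  then obtain W where "openin X W" "X closure_of N\<^sub>1 \<subseteq> W"
      "disjnt (X closure_of N\<^sub>2) (X closure_of W)"
    using normal_space[THEN iffD1, OF assms(1), rule_format, OF conjI[OF closedin_closure_of conjI[OF closedin_closure_of]]]
    by metis
  with N(1,2,4,5) show ?thesis
    by blast
qed

lemma F_tau_embedded_if_normal_t1_nw_le:
  assumes "normal_space X" "t1_space X" "Y \<subseteq> topspace X"
    and "infinite T" and "nw_le (subtopology X Y) T"
  shows "F_tau_embedded X Y T"
proof -
  obtain \<N> where net: "network (subtopology X Y) \<N>"
    and card_\<N>: "(card_of \<N>, card_of T) \<in> ordLeq"
    using assms(5) unfolding nw_le_def by blast
  have NY: "N \<subseteq> Y" if "N \<in> \<N>" for N
    using net that unfolding network_def by auto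
  define Q where "Q p W \<longleftrightarrow> openin X W \<and> X closure_of (fst p) \<subseteq> W \<and>
      disjnt (X closure_of (snd p)) (X closure_of W)" for p W
  define P where "P = {p \<in> \<N> \<times> \<N>. \<exists>W. Q p W}"
  define sep where "sep p = (SOME W. Q p W)" for p
  define \<U> where "\<U> = sep ` P"
  have Q_sep: "Q p (sep p)" if "p \<in> P" for p
    using that unfolding P_def sep_def by (blast intro: someI)
  have "\<forall>U \<in> \<U>. openin X U"
    unfolding \<U>_def using Q_sep Q_def by auto
  moreover have "F_separates X \<U> Y"
    unfolding F_separates_def
  proof (intro ballI impI)
    fix x y assume "x \<in> Y" "y \<in> Y" "x \<noteq> y"
    from normal_t1_network_separates_points[OF assms(1-3) net this]
    obtain N\<^sub>1 N\<^sub>2 W where N: "N\<^sub>1 \<in> \<N>" "N\<^sub>2 \<in> \<N>" "x \<in> N\<^sub>1" "y \<in> N\<^sub>2"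
        and "Q (N\<^sub>1, N\<^sub>2) W"
      unfolding Q_def by auto
    then have p: "(N\<^sub>1, N\<^sub>2) \<in> P"
      unfolding P_def by blast
    have "x \<in> X closure_of N\<^sub>1" "y \<in> X closure_of N\<^sub>2"
      using N NY assms(3) closure_of_subset by (meson subset_trans subsetD)+
    then have "x \<in> sep (N\<^sub>1, N\<^sub>2)" "y \<notin> X closure_of sep (N\<^sub>1, N\<^sub>2)"
      using Q_sep[OF p] unfolding Q_def disjnt_iff by auto
    moreover have "sep (N\<^sub>1, N\<^sub>2) \<in> \<U>"
      unfolding \<U>_def using p by blast
    ultimately show "\<exists>U\<in>\<U>. x \<in> U \<and> y \<notin> X closure_of U \<or> y \<in> U \<and> x \<notin> X closure_of U"
      by blast
  qed
  moreover have "(card_of \<U>, card_of T) \<in> ordLeq"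
  proof -
    have "(card_of \<U>, card_of P) \<in> ordLeq"
      unfolding \<U>_def by (rule card_of_image)
    also have "(card_of P, card_of (\<N> \<times> \<N>)) \<in> ordLeq"
      unfolding P_def by (rule card_of_mono1) blast
    also have "(card_of (\<N> \<times> \<N>), card_of T) \<in> ordLeq"
      using assms(4) card_\<N>
      by (intro card_of_Times_ordLeq_infinite_Field) (simp_all add: card_of_card_order_on Field_card_of)
    finally show ?thesis .
  qed
  ultimately show ?thesis
    by (rule F_tau_embedded_if_card_of_ordLeq)
qed

definition preopen_ext :: "'a topology \<Rightarrow> 'a set \<Rightarrow> 'a set \<Rightarrow> 'a set" where
  "preopen_ext X Y U = X interior_of (X closure_of Y) - X closure_of (Y - U)"

lemma openin_preopen_ext: "openin X (preopen_ext X Y U)"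
  unfolding preopen_ext_def by (intro openin_diff openin_interior_of closedin_closure_of)

lemma preopen_ext_subset_closure_of: "preopen_ext X Y U \<subseteq> X closure_of Y"
  unfolding preopen_ext_def using interior_of_subset[of X "X closure_of Y"] by blast

lemma preopen_ext_Int_subset:
  assumes "Y \<subseteq> topspace X"
  shows "preopen_ext X Y U \<inter> Y \<subseteq> U"
  unfolding preopen_ext_def using assms closure_of_subset[of "Y - U" X] by auto

lemma subset_preopen_ext:
  assumes "preopen X Y" and "openin (subtopology X Y) U"
  shows "U \<subseteq> preopen_ext X Y U"
proof
  fix y assume "y \<in> U"
  obtain G where G: "openin X G" "U = G \<inter> Y"
    using assms(2) by (auto simp: openin_subtopology)
  then have "y \<notin> X closure_of (Y - U)"
    using \<open>y \<in> U\<close> unfolding in_closure_of by blast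
  moreover have "y \<in> X interior_of (X closure_of Y)"
    using assms(1) \<open>y \<in> U\<close> G unfolding preopen_def by blast
  ultimately show "y \<in> preopen_ext X Y U"
    unfolding preopen_ext_def by simp
qed

text \<open>Both remaining properties rest on the density of \<open>Y\<close> in open subsets of
  \<open>cl Y\<close>: such a set has the same closure as its trace on \<open>Y\<close>.\<close>

lemma closure_of_preopen_ext_subset:
  assumes "Y \<subseteq> topspace X"
  shows "X closure_of (preopen_ext X Y U) \<subseteq> X closure_of U"
proof -
  have "X closure_of (preopen_ext X Y U) = X closure_of (preopen_ext X Y U \<inter> Y)"
    using closure_of_openin_Int_superset[of X "preopen_ext X Y U" Y]
    by (simp add: openin_preopen_ext preopen_ext_subset_closure_of)
  also have "\<dots> \<subseteq> X closure_of U"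
    using preopen_ext_Int_subset[OF assms] by (rule closure_of_mono)
  finally show ?thesis .
qed

lemma Inter_preopen_ext_eq_empty:
  assumes "Y \<subseteq> topspace X" and "finite \<F>" "\<F> \<noteq> {}" "\<Inter>\<F> = {}"
  shows "\<Inter>(preopen_ext X Y ` \<F>) = {}"
proof -
  let ?V = "\<Inter>(preopen_ext X Y ` \<F>)"
  obtain U\<^sub>0 where "U\<^sub>0 \<in> \<F>"
    using assms(3) by blast
  have "openin X ?V"
    by (rule openin_Inter) (use assms(2,3) openin_preopen_ext in auto)
  moreover have "?V \<subseteq> X closure_of Y"
    using INT_lower[OF \<open>U\<^sub>0 \<in> \<F>\<close>] preopen_ext_subset_closure_of by (rule order_trans)
  moreover have "?V \<inter> Y \<subseteq> \<Inter>\<F>"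
  proof (rule Inter_greatest)
    fix U assume "U \<in> \<F>"
    then have "?V \<subseteq> preopen_ext X Y U"
      by (rule INT_lower)
    then show "?V \<inter> Y \<subseteq> U"
      using preopen_ext_Int_subset[OF assms(1), of U] by blast
  qed
  ultimately have "X closure_of ?V = {}"
    using closure_of_openin_Int_superset[of X ?V Y] assms(4) by simp
  then show ?thesis
    using closure_of_subset[OF openin_subset[OF \<open>openin X ?V\<close>]] by blast
qed

lemma point_finite_preopen_ext_image:
  assumes "Y \<subseteq> topspace X" and "strongly_point_finite \<alpha>"
  shows "point_finite X (preopen_ext X Y ` \<alpha>)"
  unfolding point_finite_def
proof
  fix x
  let ?\<C> = "{U \<in> \<alpha>. x \<in> preopen_ext X Y U}"
  have "finite ?\<C>"
  proof (rule strongly_point_finite_centred_finite[OF assms(2)])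
    fix \<F> assume "\<F> \<subseteq> ?\<C>" "finite \<F>"
    then show "\<Inter>\<F> \<noteq> {}"
      using Inter_preopen_ext_eq_empty[OF assms(1)] by (cases "\<F> = {}") blast+
  qed auto
  moreover have "{V \<in> preopen_ext X Y ` \<alpha>. x \<in> V} \<subseteq> preopen_ext X Y ` ?\<C>"
    by auto
  ultimately show "finite {V \<in> preopen_ext X Y ` \<alpha>. x \<in> V}"
    using finite_surj by blast
qed

lemma F_separates_preopen_ext_image:
  assumes "Y \<subseteq> topspace X" "preopen X Y"
    and "\<forall>U \<in> \<U>. openin (subtopology X Y) U" and "F_separates (subtopology X Y) \<U> Y"
  shows "F_separates X (preopen_ext X Y ` \<U>) Y"
proof -
  have "\<exists>V \<in> preopen_ext X Y ` \<U>. x \<in> V \<and> y \<notin> X closure_of V"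
    if "U \<in> \<U>" "x \<in> U" "y \<in> Y" "y \<notin> subtopology X Y closure_of U" for U x y
  proof -
    have "U \<subseteq> Y"
      using openin_subset[of "subtopology X Y" U] assms(3) that(1) by auto
    then have "y \<notin> X closure_of U"
      using that(3,4) by (simp add: closure_of_subtopology Int_absorb1)
    then have "y \<notin> X closure_of (preopen_ext X Y U)"
      using closure_of_preopen_ext_subset[OF assms(1)] by blast
    then show ?thesis
      using that(1,2) assms(2,3) subset_preopen_ext by blast
  qed
  then show ?thesis
    using assms(4) unfolding F_separates_def by metis
qed

lemma F_tau_embedded_if_preopen:
  assumes "Y \<subseteq> topspace X" "preopen X Y"
    and "\<forall>i \<in> T. (\<forall>U \<in> \<alpha> i. openin (subtopology X Y) U) \<and> strongly_point_finite (\<alpha> i)"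
    and "F_separates (subtopology X Y) (\<Union>i \<in> T. \<alpha> i) Y"
  shows "F_tau_embedded X Y T"
  unfolding F_tau_embedded_def
proof (intro exI[of _ "\<lambda>i. preopen_ext X Y ` \<alpha> i"] conjI ballI)
  fix i assume "i \<in> T"
  then show "point_finite X (preopen_ext X Y ` \<alpha> i)"
    using assms(1,3) point_finite_preopen_ext_image by blast
  show "openin X V" if "V \<in> preopen_ext X Y ` \<alpha> i" for V
    using that openin_preopen_ext by blast
next
  show "F_separates X (\<Union>i \<in> T. preopen_ext X Y ` \<alpha> i) Y"
    using F_separates_preopen_ext_image[OF assms(1,2) _ assms(4)] assms(3)
    by (simp add: image_UN[symmetric])
qed

theorem theorem4p8:
  fixes X :: "'a topology" and Y :: "'a set" and T :: "'i set"
  assumes "t0_space X"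
    and "Y \<subseteq> topspace X"
    and "(normal_space X \<and> t1_space X \<and> infinite T \<and> nw_le (subtopology X Y) T)
         \<or> (preopen X Y \<and>
            (\<exists>\<alpha> :: 'i \<Rightarrow> 'a set set.
               (\<forall>i \<in> T. (\<forall>U \<in> \<alpha> i. openin (subtopology X Y) U) \<and> strongly_point_finite (\<alpha> i)) \<and>
               F_separates (subtopology X Y) (\<Union>i \<in> T. \<alpha> i) Y))"
  shows "F_tau_embedded X Y T"
  using assms(3) F_tau_embedded_if_normal_t1_nw_le[OF _ _ assms(2)]
    F_tau_embedded_if_preopen[OF assms(2)] by blast

end
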